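(* Let $n$ be odd and squarefree, let $p'$ be a prime divisor of $n$, and let $A=L(n;p')$. Let $S=(x_1,\ldots,x_l)$ be a sequence in $\mathbb{Z}_n$ such that for every prime divisor $p$ of $n$, at least two terms of $S$ are coprime to $p$. Let $n'=n/p'$ and let $S'$ be the image of $S$ under the natural map $\mathbb{Z}_n\to\mathbb{Z}_{n'}$. Suppose at most one term of $S'$ is a unit. Then $S$ is an $A$-weighted zero-sum sequence.
   Context: $\mathbb{Z}_m$ is the integers mod $m$, $U(m)$ its unit group. For $A\subseteq\mathbb{Z}_n$, a sequence $(x_1,\ldots,x_l)$ is an $A$-weighted zero-sum sequence if there exist $a_1,\ldots,a_l\in A$ with $\sum a_ix_i=0$. For odd $m=\prod p_i^{r_i}$, prime $p\mid m$ and $a\in U(m)$, $\left(\frac{a}{p}\right)$ is the Legendre symbol of the image mod $p$ and $\left(\frac{a}{m}\right)=\prod\left(\frac{a}{p_i}\right)^{r_i}$; $L(m;p')=\{a\in U(m):\left(\frac{a}{m}\right)=\left(\frac{a}{p'}\right)\}$ for a prime $p'\mid m$. *)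

theory Defs
  imports "HOL-Number_Theory.Number_Theory" "HOL-Computational_Algebra.Squarefree"
begin

(* Elements of Z_m are represented by naturals in {0..<m}; a is a unit iff coprime a m. *)

definition jacobi_sym :: "nat \<Rightarrow> nat \<Rightarrow> int" where
  "jacobi_sym a m = (\<Prod>p\<in>prime_factors m. Legendre (int a) (int p) ^ multiplicity p m)"

definition Lset :: "nat \<Rightarrow> nat \<Rightarrow> nat set" where
  "Lset m p' = {a. a < m \<and> coprime a m \<and> jacobi_sym a m = Legendre (int a) (int p')}"

definition weighted_zero_sum :: "nat \<Rightarrow> nat set \<Rightarrow> nat list \<Rightarrow> bool" where
  "weighted_zero_sum n A xs \<longleftrightarrow>
     (\<exists>ws. length ws = length xs \<and> set ws \<subseteq> A \<and>
        (\<Sum>i<length xs. ws ! i * xs ! i) mod n = 0)"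

end

theory Submission
  imports Defs
begin

text \<open>For every prime q of n one finds weights that are units mod q and turn the sequence
  into a zero sum mod q; since q > 2, two terms that are units mod q suffice for this. The
  Chinese remainder theorem glues these local weights into weights mod n, and a glued weight
  lies in L(n;p') iff the product of its Legendre symbols over the primes of n' = n/p' is 1.
  All terms but one are non-units mod n', i.e. divisible by a prime q of n', so their weight
  mod q is free and can be chosen with the Legendre symbol that makes the product 1; the one
  remaining term is given the weight 1 at every prime.\<close>

lemma coprime_iff_prime_factors_not_dvd:
  fixes a n :: nat
  assumes "n \<noteq> 0"
  shows "coprime a n \<longleftrightarrow> (\<forall>p\<in>prime_factors n. \<not> p dvd a)"
proof
  assume "coprime a n"
  then show "\<forall>p\<in>prime_factors n. \<not> p dvd a"
    by (metis coprime_common_divisor in_prime_factors_iff not_prime_unit)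
next
  assume no_common: "\<forall>p\<in>prime_factors n. \<not> p dvd a"
  show "coprime a n"
  proof (rule ccontr)
    assume "\<not> coprime a n"
    then obtain c where "c dvd a" "c dvd n" "\<not> is_unit c" by (rule not_coprimeE)
    then obtain p where "prime p" "p dvd c" using prime_factor_nat by auto
    then show False
      using no_common \<open>c dvd a\<close> \<open>c dvd n\<close> assms by (meson dvd_trans in_prime_factors_iff)
  qed
qed

lemma squarefree_dvdI:
  fixes n m :: nat
  assumes "squarefree n" and "\<And>p. p \<in> prime_factors n \<Longrightarrow> p dvd m"
  shows "n dvd m"
proof (cases "m = 0")
  case False
  have "n \<noteq> 0" using assms(1) by (metis not_squarefree_0)
  then show ?thesis
  proof (rule multiplicity_le_imp_dvd)
    fix p :: nat assume "prime p"
    show "multiplicity p n \<le> multiplicity p m"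
    proof (cases "p \<in> prime_factors n")
      case True
      then have "multiplicity p n = 1"
        using assms(1) \<open>n \<noteq> 0\<close> squarefree_factorial_semiring' by blast
      moreover have "multiplicity p m > 0"
        using assms(2)[OF True] \<open>prime p\<close> False prime_multiplicity_gt_zero_iff by blast
      ultimately show ?thesis by simp
    next
      case False
      then show ?thesis using \<open>prime p\<close> \<open>n \<noteq> 0\<close>
        by (simp add: in_prime_factors_iff not_dvd_imp_multiplicity_0)
    qed
  qed
qed simp

lemma prime_factors_squarefree_div:
  fixes n p :: nat
  assumes "squarefree n" "prime p" "p dvd n"
  shows "prime_factors n = insert p (prime_factors (n div p))"
    and "p \<notin> prime_factors (n div p)"
proof -
  have n: "n = p * (n div p)" using assms(3) by simp
  have "n div p \<noteq> 0" using assms n by (metis mult_0_right not_squarefree_0)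
  then show "prime_factors n = insert p (prime_factors (n div p))"
    using assms(2) prime_gt_0_nat by (subst n) (simp add: prime_factors_product prime_prime_factors)
  show "p \<notin> prime_factors (n div p)"
  proof
    assume "p \<in> prime_factors (n div p)"
    then have "p ^ 2 dvd n" by (subst n) (simp add: power2_eq_square in_prime_factors_iff)
    then show False using assms(1,2) squarefreeD not_prime_unit by blast
  qed
qed

lemma chinese_remainder_prime_factors:
  fixes n :: nat and u :: "nat \<Rightarrow> int"
  assumes "n \<noteq> 0"
  shows "\<exists>w<n. \<forall>q\<in>prime_factors n. [int w = u q] (mod int q)"
proof -
  have "\<forall>q\<in>prime_factors n. \<forall>q'\<in>prime_factors n. q \<noteq> q' \<longrightarrow> coprime (id q) (id q')"
    by (auto intro: primes_coprime)
  then obtain w where w: "\<forall>q\<in>prime_factors n. [w = nat (u q mod int q)] (mod id q)"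
    using chinese_remainder_nat[of "prime_factors n" id "\<lambda>q. nat (u q mod int q)"] by auto
  have "[int (w mod n) = u q] (mod int q)" if q: "q \<in> prime_factors n" for q
  proof -
    have "[w mod n = w] (mod q)"
      using q by (simp add: cong_def in_prime_factors_iff mod_mod_cancel)
    also have "[w = nat (u q mod int q)] (mod q)" using w q by simp
    finally have "[int (w mod n) = int (nat (u q mod int q))] (mod int q)"
      by (simp only: cong_int_iff)
    also have "int (nat (u q mod int q)) = u q mod int q"
      using q by (simp add: in_prime_factors_iff prime_gt_0_nat)
    also have "[u q mod int q = u q] (mod int q)" by (simp add: cong_def)
    finally show ?thesis .
  qed
  then show ?thesis using assms by (intro exI[of _ "w mod n"]) simp
qed

lemma Legendre_cong:
  assumes "[a = b] (mod p)"
  shows "Legendre a p = Legendre b p"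
proof -
  have "[a = 0] (mod p) \<longleftrightarrow> [b = 0] (mod p)" and "QuadRes p a \<longleftrightarrow> QuadRes p b"
    using assms cong_sym cong_trans unfolding QuadRes_def by blast+
  then show ?thesis unfolding Legendre_def by simp
qed

lemma Legendre_one:
  fixes p :: int
  assumes "prime p"
  shows "Legendre 1 p = 1"
proof -
  have "\<not> [1 = 0] (mod p)" using assms by (auto simp: cong_0_iff)
  moreover have "QuadRes p 1" unfolding QuadRes_def by (rule exI[of _ 1]) simp
  ultimately show ?thesis by (simp add: Legendre_def)
qed

lemma prod_Legendre_in_plus_minus_one:
  assumes "\<forall>q\<in>Q. \<not> m q dvd a q"
  shows "(\<Prod>q\<in>Q. Legendre (a q) (m q)) \<in> {1, -1}"
  using assms
proof (induction Q rule: infinite_finite_induct)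
  case (insert q Q)
  then have "Legendre (a q) (m q) \<in> {1, -1}" by (simp add: Legendre_def cong_0_iff)
  moreover have "(\<Prod>q\<in>Q. Legendre (a q) (m q)) \<in> {1, -1}" using insert by simp
  ultimately show ?case using insert.hyps by auto
qed auto

text \<open>A primitive root g is a non-residue: otherwise Euler's criterion gives
  g^((q-1)/2) = 1 (mod q), contradicting ord g = q - 1.\<close>

lemma exists_Legendre_eq:
  fixes q :: nat and \<epsilon> :: int
  assumes "prime q" "q > 2" "\<epsilon> \<in> {1, -1}"
  shows "\<exists>g. \<not> int q dvd g \<and> Legendre g (int q) = \<epsilon>"
proof (cases "\<epsilon> = 1")
  case True
  then show ?thesis using assms(1) Legendre_one[of "int q"] by (intro exI[of _ 1]) auto
next
  case False
  obtain g where "residue_primroot q g"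
    using prime_primitive_root_exists assms(1) prime_gt_1_nat by blast
  then have "coprime q g" and ord_g: "ord q g = q - 1"
    using assms(1) by (auto simp: residue_primroot_def totient_prime)
  then have not_dvd: "\<not> int q dvd int g"
    using assms(1) by (metis coprime_common_divisor dvd_refl int_dvd_int_iff not_prime_unit)
  have "Legendre (int g) (int q) \<noteq> 1"
  proof
    assume "Legendre (int g) (int q) = 1"
    moreover have "[Legendre (int g) (int q) = int g ^ ((q - 1) div 2)] (mod int q)"
      using euler_criterion assms(1,2) by blast
    ultimately have "[int (g ^ ((q - 1) div 2)) = int 1] (mod int q)"
      by (simp add: cong_sym)
    then have "[g ^ ((q - 1) div 2) = 1] (mod q)" by (simp only: cong_int_iff)
    then have "q - 1 dvd (q - 1) div 2" by (simp add: ord_divides' ord_g)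
    moreover have "(q - 1) div 2 > 0" and "(q - 1) div 2 < q - 1" using assms(2) by auto
    ultimately show False using dvd_imp_le not_less by blast
  qed
  then have "Legendre (int g) (int q) = -1"
    using not_dvd by (simp add: Legendre_def cong_0_iff split: if_splits)
  then show ?thesis using False assms(3) not_dvd by (intro exI[of _ "int g"]) auto
qed

lemma jacobi_sym_squarefree:
  assumes "squarefree m"
  shows "jacobi_sym a m = (\<Prod>p\<in>prime_factors m. Legendre (int a) (int p))"
proof -
  have "m \<noteq> 0" using assms by (metis not_squarefree_0)
  then have "multiplicity p m = 1" if "p \<in> prime_factors m" for p
    using assms that squarefree_factorial_semiring' by blast
  then show ?thesis unfolding jacobi_sym_def by (intro prod.cong) auto
qed

lemma Lset_squarefreeI:
  assumes "squarefree n" "prime p'" "p' dvd n"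
    and "w < n" "coprime w n"
    and "(\<Prod>q\<in>prime_factors (n div p'). Legendre (int w) (int q)) = 1"
  shows "w \<in> Lset n p'"
proof -
  have "jacobi_sym w n = (\<Prod>q\<in>insert p' (prime_factors (n div p')). Legendre (int w) (int q))"
    using jacobi_sym_squarefree[OF assms(1)] prime_factors_squarefree_div(1)[OF assms(1-3)]
    by simp
  also have "\<dots> = Legendre (int w) (int p')"
    using prime_factors_squarefree_div(2)[OF assms(1-3)] assms(6) by simp
  finally show ?thesis using assms(4,5) unfolding Lset_def by simp
qed

definition zero_sum_unit_weights :: "int \<Rightarrow> 'a set \<Rightarrow> ('a \<Rightarrow> int) \<Rightarrow> ('a \<Rightarrow> int) \<Rightarrow> bool" where
  "zero_sum_unit_weights q I x c \<longleftrightarrow> (\<forall>i\<in>I. \<not> q dvd c i) \<and> q dvd (\<Sum>i\<in>I. c i * x i)"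

lemma exists_unit_solution_cong:
  fixes q x t :: int
  assumes "prime q" "\<not> q dvd x" "\<not> q dvd t"
  shows "\<exists>a. \<not> q dvd a \<and> [a * x = t] (mod q)"
proof -
  have "coprime x q" using assms(1,2) prime_imp_coprime coprime_commute by blast
  then obtain y where y: "[x * y = 1] (mod q)" using cong_solve_coprime_int by blast
  then have "[t * y * x = t] (mod q)" using cong_scalar_left[OF y, of t] by (simp add: ac_simps)
  moreover from this have "\<not> q dvd t * y" using assms(3) by (metis cong_dvd_iff dvd_mult2)
  ultimately show ?thesis by blast
qed

text \<open>Each new weight is chosen among 1 and 2 so that, as long as further terms that are
  units mod q remain, the target left for them stays a unit mod q.\<close>

lemma exists_unit_weights_cong:
  fixes q t :: int and x :: "'a \<Rightarrow> int"
  assumes "prime q" "q > 2" "finite I"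
    and "2 \<le> card {i\<in>I. \<not> q dvd x i} \<or> ((\<exists>i\<in>I. \<not> q dvd x i) \<and> \<not> q dvd t)"
  shows "\<exists>c. (\<forall>i\<in>I. \<not> q dvd c i) \<and> [(\<Sum>i\<in>I. c i * x i) = t] (mod q)"
  using assms(3,4)
proof (induction I arbitrary: t rule: finite_induct)
  case (insert k J)
  have extend: "\<exists>c. (\<forall>i\<in>insert k J. \<not> q dvd c i) \<and> [(\<Sum>i\<in>insert k J. c i * x i) = t] (mod q)"
    if a: "\<not> q dvd a" and "\<exists>c. (\<forall>i\<in>J. \<not> q dvd c i) \<and> [(\<Sum>i\<in>J. c i * x i) = t - a * x k] (mod q)"
    for a
  proof -
    from that(2) obtain c where c: "\<forall>i\<in>J. \<not> q dvd c i" "[(\<Sum>i\<in>J. c i * x i) = t - a * x k] (mod q)"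
      by blast
    have "(\<Sum>i\<in>J. (c(k := a)) i * x i) = (\<Sum>i\<in>J. c i * x i)"
      using insert.hyps(2) by (intro sum.cong) auto
    then have "(\<Sum>i\<in>insert k J. (c(k := a)) i * x i) = a * x k + (\<Sum>i\<in>J. c i * x i)"
      using insert.hyps by simp
    also have "[\<dots> = a * x k + (t - a * x k)] (mod q)" using c(2) by (intro cong_add cong_refl)
    finally show ?thesis using a c(1) by (intro exI[of _ "c(k := a)"]) auto
  qed
  have "\<not> q dvd 1" "\<not> q dvd 2"
    using assms(1,2) by (auto dest: zdvd_imp_le simp: not_prime_unit)
  consider (zero) "q dvd x k"
    | (unit_more) "\<not> q dvd x k" "\<exists>i\<in>J. \<not> q dvd x i"
    | (unit_last) "\<not> q dvd x k" "\<forall>i\<in>J. q dvd x i"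
    by blast
  then show ?case
  proof cases
    case zero
    then have "{i\<in>insert k J. \<not> q dvd x i} = {i\<in>J. \<not> q dvd x i}" by auto
    moreover have "q dvd t - 1 * x k \<longleftrightarrow> q dvd t"
      using zero by (metis diff_add_cancel dvd_add_left_iff dvd_diff mult_1)
    ultimately have "2 \<le> card {i\<in>J. \<not> q dvd x i} \<or> ((\<exists>i\<in>J. \<not> q dvd x i) \<and> \<not> q dvd t - 1 * x k)"
      using insert.prems zero by auto
    then show ?thesis using insert.IH extend \<open>\<not> q dvd 1\<close> by blast
  next
    case unit_more
    have "\<not> (q dvd t - 1 * x k \<and> q dvd t - 2 * x k)"
    proof
      assume "q dvd t - 1 * x k \<and> q dvd t - 2 * x k"
      then have "q dvd (t - 1 * x k) - (t - 2 * x k)" by (meson dvd_diff)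
      then show False using unit_more(1) by simp
    qed
    then obtain a where "\<not> q dvd a" "\<not> q dvd t - a * x k"
      using \<open>\<not> q dvd 1\<close> \<open>\<not> q dvd 2\<close> by blast
    then show ?thesis using insert.IH unit_more(2) extend by blast
  next
    case unit_last
    then have "{i\<in>insert k J. \<not> q dvd x i} = {k}" by auto
    then have "\<not> q dvd t" using insert.prems by auto
    then obtain a where a: "\<not> q dvd a" "[a * x k = t] (mod q)"
      using exists_unit_solution_cong assms(1) unit_last(1) by blast
    have "[(\<Sum>i\<in>J. 1 * x i) = 0] (mod q)"
      using unit_last(2) by (simp add: cong_0_iff dvd_sum)
    also have "[0 = t - a * x k] (mod q)"
      using a(2) by (simp add: cong_diff_iff_cong_0 cong_sym)
    finally have "[(\<Sum>i\<in>J. 1 * x i) = t - a * x k] (mod q)" .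
    then show ?thesis
      using \<open>\<not> q dvd 1\<close> by (intro extend[OF a(1)] exI[of _ "\<lambda>_. 1"]) simp
  qed
qed simp

lemma exists_zero_sum_unit_weights:
  fixes q :: int and x :: "'a \<Rightarrow> int"
  assumes "prime q" "q > 2" "finite I" "j \<in> I" "2 \<le> card {i\<in>I. \<not> q dvd x i}"
  shows "\<exists>c. c j = 1 \<and> zero_sum_unit_weights q I x c"
proof -
  let ?J = "I - {j}"
  have "2 \<le> card {i\<in>?J. \<not> q dvd x i} \<or> ((\<exists>i\<in>?J. \<not> q dvd x i) \<and> \<not> q dvd - x j)"
  proof (cases "q dvd x j")
    case True
    then have "{i\<in>?J. \<not> q dvd x i} = {i\<in>I. \<not> q dvd x i}" by auto
    then show ?thesis using assms(5) by simp
  next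
    case False
    have "{i\<in>?J. \<not> q dvd x i} = {i\<in>I. \<not> q dvd x i} - {j}" by auto
    moreover have "card ({i\<in>I. \<not> q dvd x i} - {j}) = card {i\<in>I. \<not> q dvd x i} - 1"
      using False assms(3,4) by (intro card_Diff_singleton) auto
    ultimately have "card {i\<in>?J. \<not> q dvd x i} > 0" using assms(5) by simp
    then show ?thesis using False by (auto simp: card_gt_0_iff)
  qed
  then obtain c where c: "\<forall>i\<in>?J. \<not> q dvd c i" "[(\<Sum>i\<in>?J. c i * x i) = - x j] (mod q)"
    using exists_unit_weights_cong[OF assms(1-2)] assms(3) by blast
  have "(\<Sum>i\<in>I. (c(j := 1)) i * x i) = x j + (\<Sum>i\<in>?J. c i * x i)"
    using assms(3,4) by (simp add: sum.remove)
  moreover have "q dvd x j + (\<Sum>i\<in>?J. c i * x i)"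
    using c(2) by (simp add: cong_iff_dvd_diff add.commute)
  ultimately show ?thesis using c(1) assms(1) not_prime_unit
    unfolding zero_sum_unit_weights_def by (intro exI[of _ "c(j := 1)"]) auto
qed

text \<open>A weight at a prime q of Q that divides x i does not affect the sum mod q, so it can
  be replaced by a unit with any prescribed Legendre symbol.\<close>

lemma exists_zero_sum_unit_weights_Legendre_prod_one:
  fixes e :: "nat \<Rightarrow> 'a \<Rightarrow> int" and x :: "'a \<Rightarrow> int"
  assumes "finite Q" "Q \<subseteq> P" "\<forall>q\<in>Q. prime q \<and> q > 2"
    and e: "\<forall>q\<in>P. zero_sum_unit_weights (int q) I x (e q)"
    and free: "\<forall>i\<in>I. (\<forall>q\<in>Q. e q i = 1) \<or> (\<exists>q\<in>Q. int q dvd x i)"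
  shows "\<exists>d. (\<forall>q\<in>P. zero_sum_unit_weights (int q) I x (d q)) \<and>
    (\<forall>i\<in>I. (\<Prod>q\<in>Q. Legendre (d q i) (int q)) = 1)"
proof -
  define F where "F = {i\<in>I. \<exists>q\<in>Q. int q dvd x i}"
  have "\<forall>i\<in>F. \<exists>q\<in>Q. int q dvd x i" unfolding F_def by blast
  then obtain r where r: "\<And>i. i \<in> F \<Longrightarrow> r i \<in> Q \<and> int (r i) dvd x i"
    using bchoice[of F] by metis
  obtain g where g: "\<And>q \<epsilon>. q \<in> Q \<Longrightarrow> \<epsilon> \<in> {1, -1} \<Longrightarrow>
      \<not> int q dvd g q \<epsilon> \<and> Legendre (g q \<epsilon>) (int q) = \<epsilon>"
    using exists_Legendre_eq assms(3) by metis
  have e_unit: "\<not> int q dvd e q i" if "q \<in> P" "i \<in> I" for q i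
    using e that unfolding zero_sum_unit_weights_def by blast
  define s where "s i = (\<Prod>q\<in>Q - {r i}. Legendre (e q i) (int q))" for i
  have s: "s i \<in> {1, -1}" if "i \<in> I" for i
    unfolding s_def using e_unit that assms(2) by (intro prod_Legendre_in_plus_minus_one) auto
  define d where "d q i = (if i \<in> F \<and> q = r i then g q (s i) else e q i)" for q i
  have "zero_sum_unit_weights (int q) I x (d q)" if q: "q \<in> P" for q
  proof -
    have "[(\<Sum>i\<in>I. d q i * x i) = (\<Sum>i\<in>I. e q i * x i)] (mod int q)"
    proof (rule cong_sum)
      fix i assume "i \<in> I"
      show "[d q i * x i = e q i * x i] (mod int q)"
      proof (cases "i \<in> F \<and> q = r i")
        case True
        then have "int q dvd (d q i - e q i) * x i" using r by auto
        then show ?thesis by (simp add: cong_iff_dvd_diff left_diff_distrib)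
      qed (auto simp: d_def)
    qed
    moreover have "\<not> int q dvd d q i" if "i \<in> I" for i
      using e_unit[OF q that] g r s[OF that] unfolding d_def F_def by auto
    ultimately show ?thesis
      using e q cong_dvd_iff unfolding zero_sum_unit_weights_def by blast
  qed
  moreover have "(\<Prod>q\<in>Q. Legendre (d q i) (int q)) = 1" if i: "i \<in> I" for i
  proof (cases "i \<in> F")
    case True
    have "(\<Prod>q\<in>Q. Legendre (d q i) (int q))
        = Legendre (d (r i) i) (int (r i)) * (\<Prod>q\<in>Q - {r i}. Legendre (d q i) (int q))"
      using r[OF True] by (intro prod.remove assms(1)) blast
    also have "(\<Prod>q\<in>Q - {r i}. Legendre (d q i) (int q)) = s i"
      unfolding s_def d_def by (intro prod.cong) auto
    also have "Legendre (d (r i) i) (int (r i)) = s i"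
      using True g r s[OF i] unfolding d_def by auto
    finally show ?thesis using s[OF i] by auto
  next
    case False
    then have "\<forall>q\<in>Q. d q i = 1" using free i unfolding d_def F_def by auto
    then have "(\<Prod>q\<in>Q. Legendre (d q i) (int q)) = (\<Prod>q\<in>Q. 1)"
      using assms(3) by (intro prod.cong) (simp_all add: Legendre_one)
    then show ?thesis by simp
  qed
  ultimately show ?thesis by blast
qed

lemma weighted_zero_sum_Lset_chinese_remainder:
  fixes n p' :: nat and xs :: "nat list" and d :: "nat \<Rightarrow> nat \<Rightarrow> int"
  assumes "squarefree n" "prime p'" "p' dvd n"
    and d: "\<forall>q\<in>prime_factors n. zero_sum_unit_weights (int q) {..<length xs} (\<lambda>i. int (xs ! i)) (d q)"
    and d_Legendre: "\<forall>i<length xs. (\<Prod>q\<in>prime_factors (n div p'). Legendre (d q i) (int q)) = 1"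
  shows "weighted_zero_sum n (Lset n p') xs"
proof -
  have "n \<noteq> 0" using assms(1) by (metis not_squarefree_0)
  then have "\<exists>w<n. \<forall>q\<in>prime_factors n. [int w = d q i] (mod int q)" for i
    by (rule chinese_remainder_prime_factors)
  then obtain w where w_lt: "\<And>i. w i < n"
    and w_cong: "\<And>i q. q \<in> prime_factors n \<Longrightarrow> [int (w i) = d q i] (mod int q)"
    by metis
  have w_Lset: "w i \<in> Lset n p'" if i: "i < length xs" for i
  proof (rule Lset_squarefreeI[OF assms(1-3) w_lt])
    have "\<not> q dvd w i" if q: "q \<in> prime_factors n" for q
    proof -
      have "\<not> int q dvd d q i" using d q i unfolding zero_sum_unit_weights_def by simp
      then show ?thesis using cong_dvd_iff[OF w_cong[OF q]] by simp
    qed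
    then show "coprime (w i) n" using \<open>n \<noteq> 0\<close> coprime_iff_prime_factors_not_dvd by blast
    have "prime_factors (n div p') \<subseteq> prime_factors n"
      using prime_factors_squarefree_div(1)[OF assms(1-3)] by blast
    then have "(\<Prod>q\<in>prime_factors (n div p'). Legendre (int (w i)) (int q))
        = (\<Prod>q\<in>prime_factors (n div p'). Legendre (d q i) (int q))"
      using w_cong Legendre_cong by (intro prod.cong) blast+
    then show "(\<Prod>q\<in>prime_factors (n div p'). Legendre (int (w i)) (int q)) = 1"
      using d_Legendre i by simp
  qed
  have "n dvd (\<Sum>i<length xs. w i * xs ! i)"
  proof (rule squarefree_dvdI[OF assms(1)])
    fix q assume q: "q \<in> prime_factors n"
    have "[(\<Sum>i<length xs. int (w i) * int (xs ! i)) = (\<Sum>i<length xs. d q i * int (xs ! i))] (mod int q)"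
      using w_cong[OF q] by (intro cong_sum cong_mult cong_refl)
    moreover have "int q dvd (\<Sum>i<length xs. d q i * int (xs ! i))"
      using d q unfolding zero_sum_unit_weights_def by blast
    ultimately have "int q dvd (\<Sum>i<length xs. int (w i) * int (xs ! i))"
      using cong_dvd_iff by blast
    then show "q dvd (\<Sum>i<length xs. w i * xs ! i)"
      by (simp flip: int_dvd_int_iff)
  qed
  moreover have "(\<Sum>i<length xs. map w [0..<length xs] ! i * xs ! i) = (\<Sum>i<length xs. w i * xs ! i)"
    by (intro sum.cong) auto
  ultimately show ?thesis
    unfolding weighted_zero_sum_def using w_Lset
    by (intro exI[of _ "map w [0..<length xs]"]) auto
qed

lemma weighted_zero_sum_Lset_if_one_unit:
  fixes n p' j :: nat and xs :: "nat list"
  assumes "odd n" "squarefree n" "prime p'" "p' dvd n"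
    and two_units: "\<forall>q\<in>prime_factors n. 2 \<le> card {i. i < length xs \<and> coprime (xs ! i) q}"
    and "j < length xs"
    and others: "\<forall>i<length xs. i \<noteq> j \<longrightarrow> \<not> coprime (xs ! i) (n div p')"
  shows "weighted_zero_sum n (Lset n p') xs"
proof -
  let ?I = "{..<length xs}" and ?x = "\<lambda>i. int (xs ! i)" and ?Q = "prime_factors (n div p')"
  have odd_prime: "prime q \<and> q > 2" if "q \<in> prime_factors n" for q
  proof -
    have "prime q" "q dvd n" using that by (auto simp: in_prime_factors_iff)
    moreover from this have "q \<noteq> 2" using assms(1) by auto
    ultimately show ?thesis using prime_ge_2_nat[of q] by simp
  qed
  have "\<exists>c. c j = 1 \<and> zero_sum_unit_weights (int q) ?I ?x c" if q: "q \<in> prime_factors n" for q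
  proof (rule exists_zero_sum_unit_weights)
    have "coprime (xs ! i) q \<longleftrightarrow> \<not> int q dvd ?x i" for i
      using odd_prime[OF q] coprime_iff_prime_factors_not_dvd[of q]
      by (simp add: prime_prime_factors)
    then have "{i\<in>?I. \<not> int q dvd ?x i} = {i. i < length xs \<and> coprime (xs ! i) q}" by auto
    then show "2 \<le> card {i\<in>?I. \<not> int q dvd ?x i}" using two_units q by simp
  qed (use odd_prime[OF q] assms(6) in auto)
  then obtain e where e: "\<And>q. q \<in> prime_factors n \<Longrightarrow> e q j = 1 \<and> zero_sum_unit_weights (int q) ?I ?x (e q)"
    by metis
  have "n div p' \<noteq> 0"
    using assms(2-4) by (metis dvd_div_eq_0_iff not_squarefree_0)
  then have "\<exists>q\<in>?Q. int q dvd ?x i" if "i \<in> ?I" "i \<noteq> j" for i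
    using others that coprime_iff_prime_factors_not_dvd by auto
  moreover have Q_sub: "?Q \<subseteq> prime_factors n"
    using prime_factors_squarefree_div(1)[OF assms(2-4)] by blast
  ultimately have "\<forall>i\<in>?I. (\<forall>q\<in>?Q. e q i = 1) \<or> (\<exists>q\<in>?Q. int q dvd ?x i)"
    using e by blast
  then obtain d where "\<forall>q\<in>prime_factors n. zero_sum_unit_weights (int q) ?I ?x (d q)"
    and "\<forall>i\<in>?I. (\<Prod>q\<in>?Q. Legendre (d q i) (int q)) = 1"
    using exists_zero_sum_unit_weights_Legendre_prod_one[of ?Q "prime_factors n" ?I ?x e]
      Q_sub odd_prime e by blast
  then show ?thesis
    using weighted_zero_sum_Lset_chinese_remainder[OF assms(2-4)] by simp
qed

theorem lemma3p6:
  fixes n p' :: nat and xs :: "nat list"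
  assumes "odd n" and "squarefree n"
    and "prime p'" and "p' dvd n"
    and "set xs \<subseteq> {..<n}"
    and "\<forall>p. prime p \<and> p dvd n \<longrightarrow> card {i. i < length xs \<and> coprime (xs ! i) p} \<ge> 2"
    and "card {i. i < length xs \<and> coprime (xs ! i mod (n div p')) (n div p')} \<le> 1"
  shows "weighted_zero_sum n (Lset n p') xs"
proof -
  define n' where "n' = n div p'"
  let ?U = "{i. i < length xs \<and> coprime (xs ! i mod n') n'}"
  have "n' \<noteq> 0"
    using assms(2-4) unfolding n'_def by (metis dvd_div_eq_0_iff not_squarefree_0)
  have "2 \<le> card {i. i < length xs \<and> coprime (xs ! i) p'}"
    using assms(3,4,6) by blast
  then have "length xs > 0" by (cases xs) auto
  obtain j where j: "j < length xs" "?U \<subseteq> {j}"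
  proof (cases "?U = {}")
    case False
    then obtain j where "j \<in> ?U" by blast
    then show ?thesis using that card_le_Suc0_iff_eq[of ?U] assms(7) unfolding n'_def by auto
  qed (use that \<open>length xs > 0\<close> in blast)
  then have "\<forall>i<length xs. i \<noteq> j \<longrightarrow> \<not> coprime (xs ! i) n'"
    using coprime_mod_left_iff[OF \<open>n' \<noteq> 0\<close>] by auto
  moreover have "\<forall>q\<in>prime_factors n. 2 \<le> card {i. i < length xs \<and> coprime (xs ! i) q}"
    using assms(6) by (auto simp: in_prime_factors_iff)
  ultimately show ?thesis
    using weighted_zero_sum_Lset_if_one_unit[OF assms(1-4) _ j(1)] unfolding n'_def by blast
qed

end
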